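(* Let $\tau$ be in the upper half plane, $z\in\mathbb{C}$, $q^{s}=e^{2\pi i s\tau}$, $y^{s}=e^{2\pi i s z}$. Let $S_3$ and $S_4$ denote the holomorphic square roots of $\theta_3(0|\tau)/\eta(\tau)$ and $\theta_4(0|\tau)/\eta(\tau)$ on the upper half plane of the form $q^{-1/48}(1+O(q^{1/2}))$. Define $$A=\tfrac{1}{2\eta}\big(S_3\,\theta_3(z|2\tau)+S_4\,\theta_4(z|2\tau)\big),\quad C=\tfrac{1}{2\eta}\big(S_3\,\theta_3(z|2\tau)-S_4\,\theta_4(z|2\tau)\big),$$ $$B=\tfrac{1}{2\eta}\big(S_3\,\theta_2(z|2\tau)+i\,S_4\,\theta_1(z|2\tau)\big),\quad D=\tfrac{1}{2\eta}\big(S_3\,\theta_2(z|2\tau)-i\,S_4\,\theta_1(z|2\tau)\big),$$ $$E=\frac{\eta(2\tau)}{\eta(\tau)^2}\,q^{1/16}y^{-1/4}\,\theta_3\!\left(z-\tfrac{\tau}{2}\,\big|\,2\tau\right),\quad F=\frac{\eta(2\tau)}{\eta(\tau)^2}\,q^{1/16}y^{1/4}\,\theta_3\!\left(z+\tfrac{\tau}{2}\,\big|\,2\tau\right),$$ where $\eta=\eta(\tau)$, and set $\mathrm{NS}_1=A^4+B^4+C^4+D^4$, $\mathrm{NS}_2=E^4+F^4$, $\mathrm{NS}_3=A^2B^2+B^2C^2+C^2D^2+D^2A^2$, $\mathrm{NS}_4=ABF^2+BCE^2+CDF^2+ADE^2$. Then $$-2\,\mathrm{NS}_1+2\,\mathr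m{NS}_2+6\,\mathrm{NS}_3+12\,\mathrm{NS}_4=-24\,\frac{\theta_1(z|\tau)^2}{\theta_3^2}+2\left(\theta_2^4-\theta_4^4\right)\frac{\theta_3(z|\tau)^2}{\eta(\tau)^6}.$$
   Context: Jacobi theta functions: $\theta_1(z|\tau)=-i\sum_{n\in\mathbb{Z}}(-1)^n q^{(n+1/2)^2/2}y^{n+1/2}$, $\theta_2(z|\tau)=\sum_{n\in\mathbb{Z}} q^{(n+1/2)^2/2}y^{n+1/2}$, $\theta_3(z|\tau)=\sum_{n\in\mathbb{Z}} q^{n^2/2}y^{n}$, $\theta_4(z|\tau)=\sum_{n\in\mathbb{Z}}(-1)^n q^{n^2/2}y^{n}$; $\theta_i$ without argument means $\theta_i(0|\tau)$. $\eta(\tau)=q^{1/24}\prod_{n\ge1}(1-q^n)$. *)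

theory Defs
  imports "HOL-Analysis.Analysis"
begin

text \<open>ep x s = e^(2 pi i s x); so q^s = ep tau s and y^s = ep z s.\<close>
definition ep :: "complex \<Rightarrow> complex \<Rightarrow> complex" where
  "ep x s = exp (2 * of_real pi * \<i> * s * x)"

definition theta1 :: "complex \<Rightarrow> complex \<Rightarrow> complex" where
  "theta1 z \<tau> = - \<i> * infsum (\<lambda>n::int. (-1) powi n * ep \<tau> ((of_int n + 1/2)^2 / 2)
                          * ep z (of_int n + 1/2)) UNIV"

definition theta2 :: "complex \<Rightarrow> complex \<Rightarrow> complex" where
  "theta2 z \<tau> = infsum (\<lambda>n::int. ep \<tau> ((of_int n + 1/2)^2 / 2) * ep z (of_int n + 1/2)) UNIV"

definition theta3 :: "complex \<Rightarrow> complex \<Rightarrow> complex" where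
  "theta3 z \<tau> = infsum (\<lambda>n::int. ep \<tau> ((of_int n)^2 / 2) * ep z (of_int n)) UNIV"

definition theta4 :: "complex \<Rightarrow> complex \<Rightarrow> complex" where
  "theta4 z \<tau> = infsum (\<lambda>n::int. (-1) powi n * ep \<tau> ((of_int n)^2 / 2) * ep z (of_int n)) UNIV"

definition eta :: "complex \<Rightarrow> complex" where
  "eta \<tau> = ep \<tau> (1/24) * prodinf (\<lambda>n::nat. 1 - ep \<tau> (of_nat (Suc n)))"

definition normalized_sqrt :: "(complex \<Rightarrow> complex) \<Rightarrow> (complex \<Rightarrow> complex) \<Rightarrow> bool" where
  "normalized_sqrt f S \<longleftrightarrow>
     S holomorphic_on {\<tau>. Im \<tau> > 0} \<and>
     (\<forall>\<tau>. Im \<tau> > 0 \<longrightarrow> S \<tau> ^ 2 = f \<tau>) \<and>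
     (\<exists>M K. \<forall>\<tau>. Im \<tau> > M \<longrightarrow>
        norm (S \<tau> * ep \<tau> (1/48) - 1) \<le> K * norm (ep \<tau> (1/2)))"

end

theory Submission
  imports Defs
begin

text \<open>
  All four Jacobi theta functions are values of the theta function with characteristic
  \<open>\<theta>\<^sub>a(z|\<tau>) = \<Sum>\<^sub>n q\<^bsup>(n+a)\<^sup>2/2\<^esup> y\<^bsup>n+a\<^esup>\<close> at \<open>a \<in> {0, 1/2}\<close> and \<open>z\<close> or \<open>z + 1/2\<close>, and
  \<open>E\<close>, \<open>F\<close> are \<open>\<eta>(2\<tau>)/\<eta>(\<tau>)\<^sup>2\<close> times \<open>\<theta>\<^sub>a(z|2\<tau>)\<close> with \<open>a = \<plusminus>1/4\<close>. Multiplying two such series and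
  regrouping the pairs of summation indices by parity gives the duplication formulas, which
  express the squares and products of the \<open>\<theta>\<^sub>i(z|2\<tau>)\<close> and of \<open>E\<close>, \<open>F\<close> through products
  \<open>\<theta>\<^sub>i(z|\<tau>) \<theta>\<^sub>j(0|\<tau>)\<close>. Substituting them into the quartic combination leaves a rational
  identity in the theta constants, which follows from Jacobi's \<open>\<theta>\<^sub>3\<^sup>4 = \<theta>\<^sub>2\<^sup>4 + \<theta>\<^sub>4\<^sup>4\<close> and the
  eta products \<open>\<eta>(2\<tau>) \<theta>\<^sub>4(0|2\<tau>) = \<eta>(\<tau>)\<^sup>2\<close> and \<open>\<theta>\<^sub>2 \<theta>\<^sub>3 \<theta>\<^sub>4 = 2\<eta>\<^sup>3\<close>. The latter two come from the
  Jacobi triple product, obtained as the limit of Rothe's \<open>q\<close>-binomial theorem by Tannery's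
  theorem. The square roots \<open>S\<^sub>3\<close>, \<open>S\<^sub>4\<close> enter only through their squares.
\<close>

lemma ep_add: "ep x s * ep x t = ep x (s + t)"
  unfolding ep_def by (simp add: exp_add[symmetric] algebra_simps)

lemma ep_add_base: "ep x s * ep y s = ep (x + y) s"
  unfolding ep_def by (simp add: exp_add[symmetric] algebra_simps)

lemma ep_eqI: "s * x = t * y \<Longrightarrow> ep x s = ep y t"
  unfolding ep_def by (simp add: mult.assoc)

lemma ep_0_left [simp]: "ep 0 s = 1"
  unfolding ep_def by simp

lemma ep_nonzero [simp]: "ep x s \<noteq> 0"
  unfolding ep_def by simp

lemma norm_ep: "norm (ep x s) = exp (- 2 * pi * Im (s * x))"
  unfolding ep_def norm_exp_eq_Re by (simp add: algebra_simps)

lemma ep_of_real: "ep (of_real x) (of_real s) = cis (2 * pi * s * x)"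
  unfolding ep_def cis_conv_exp by (simp add: algebra_simps)

lemma ep_minus: "ep x (- s) = inverse (ep x s)"
  using ep_add[of x "- s" s] by (simp add: ep_def inverse_eq_divide field_simps)

lemma ep_of_nat_mult: "ep x (of_nat k * s) = ep x s ^ k"
  unfolding ep_def by (simp add: exp_of_nat_mult[symmetric] algebra_simps)

lemma ep_one_of_int: "ep 1 (of_int n) = 1"
proof -
  have "ep 1 (of_int n) = exp (of_int n * (2 * of_real pi * \<i>))"
    unfolding ep_def by (simp add: algebra_simps)
  then show ?thesis using exp_integer_2pi[of "of_int n"] by (simp add: algebra_simps)
qed

lemma ep_half_of_int: "ep (1/2) (of_int n) = (-1) powi n"
proof -
  have "ep (1/2) (of_int n) = exp (of_int n * (of_real pi * \<i>))"
    unfolding ep_def by (simp add: algebra_simps)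
  also have "\<dots> = exp (of_real pi * \<i>) powi n" by (rule exp_power_int[symmetric])
  finally show ?thesis by (simp add: exp_pi_i')
qed

lemma UNIV_int_eq_nonneg_Un_neg: "(UNIV :: int set) = range int \<union> range (\<lambda>n. - int (Suc n))"
proof -
  have "x \<in> range int \<union> range (\<lambda>n. - int (Suc n))" for x :: int
  proof (cases "x \<ge> 0")
    case True then show ?thesis by (auto intro: image_eqI[of _ _ "nat x"])
  next
    case False then show ?thesis by (auto intro!: image_eqI[of _ _ "nat (- x - 1)"])
  qed
  then show ?thesis by auto
qed

lemma has_sum_int_split:
  fixes f :: "int \<Rightarrow> 'a::topological_comm_monoid_add"
  assumes "((\<lambda>n. f (int n)) has_sum a) UNIV" and "((\<lambda>n. f (- int (Suc n))) has_sum b) UNIV"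
  shows "(f has_sum (a + b)) UNIV"
proof -
  have "(f has_sum a) (range int)"
    using assms(1) by (subst has_sum_reindex) (auto simp: o_def)
  moreover have "(f has_sum b) (range (\<lambda>n. - int (Suc n)))"
    using assms(2) by (subst has_sum_reindex) (auto simp: o_def inj_on_def)
  moreover have "range int \<inter> range (\<lambda>n. - int (Suc n)) = {}" by auto
  ultimately show ?thesis
    using has_sum_Un_disjoint UNIV_int_eq_nonneg_Un_neg by metis
qed

lemma infsum_int_split:
  fixes f :: "int \<Rightarrow> 'a::banach"
  assumes "f summable_on UNIV"
  shows "infsum f UNIV = (\<Sum>n. f (int n)) + (\<Sum>n. f (- int (Suc n)))"
proof -
  have "(\<lambda>n. f (int n)) summable_on UNIV"
    using summable_on_subset_banach[OF assms, of "range int"] by (simp add: summable_on_reindex o_def)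
  moreover have "(\<lambda>n. f (- int (Suc n))) summable_on UNIV"
    using summable_on_subset_banach[OF assms, of "range (\<lambda>n. - int (Suc n))"]
    by (simp add: summable_on_reindex o_def inj_on_def)
  moreover have "(h has_sum (\<Sum>n. h n)) UNIV" if "h summable_on UNIV" for h :: "nat \<Rightarrow> 'a"
    using has_sum_infsum[OF that] sums_unique[OF has_sum_imp_sums[OF has_sum_infsum[OF that]]] by simp
  ultimately have "(f has_sum ((\<Sum>n. f (int n)) + (\<Sum>n. f (- int (Suc n))))) UNIV"
    by (intro has_sum_int_split) auto
  then show ?thesis by (rule infsumI)
qed

lemma summable_on_exp_minus_abs_int: "(\<lambda>n::int. exp (- \<bar>real_of_int n\<bar>)) summable_on UNIV"
proof -
  have "summable (\<lambda>n::nat. exp (-1::real) ^ n)" by (rule summable_geometric) simp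
  then have geom: "summable (\<lambda>n::nat. exp (- real n))" by (simp add: exp_of_nat_mult[symmetric])
  then have "summable (\<lambda>n::nat. exp (- real (Suc n)))"
    using summable_Suc_iff[of "\<lambda>n. exp (- real n)"] by simp
  with geom have "(\<lambda>n. exp (- \<bar>real_of_int (int n)\<bar>)) summable_on UNIV"
    "(\<lambda>n. exp (- \<bar>real_of_int (- int (Suc n))\<bar>)) summable_on UNIV"
    by (auto intro!: summable_nonneg_imp_summable_on simp: algebra_simps)
  then show ?thesis
    unfolding summable_on_def by (blast intro: has_sum_int_split)
qed

lemma summable_on_int_exp_decay:
  fixes f :: "int \<Rightarrow> complex"
  assumes "\<And>n. norm (f n) \<le> C * exp (- \<bar>real_of_int n\<bar>)"
  shows "f summable_on UNIV"
proof -
  have "(\<lambda>n. norm (f n)) summable_on UNIV"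
    by (rule summable_on_comparison_test[OF summable_on_cmult_right[OF summable_on_exp_minus_abs_int]])
      (use assms in auto)
  then show ?thesis using summable_on_iff_abs_summable_on_complex by blast
qed

lemma has_sum_product:
  fixes f :: "'a \<Rightarrow> complex" and g :: "'b \<Rightarrow> complex"
  assumes f: "f summable_on UNIV" and g: "g summable_on UNIV"
  shows "((\<lambda>(m, n). f m * g n) has_sum (infsum f UNIV * infsum g UNIV)) UNIV"
proof -
  have fa: "(\<lambda>x. norm (f x)) summable_on UNIV" and ga: "(\<lambda>x. norm (g x)) summable_on UNIV"
    using f g summable_on_iff_abs_summable_on_complex by blast+
  have "(\<lambda>p. norm ((\<lambda>(m, n). f m * g n) p)) summable_on Sigma UNIV (\<lambda>_. UNIV)"
  proof (subst Infinite_Sum.abs_summable_on_Sigma_iff, intro conjI ballI)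
    fix x :: 'a
    show "(\<lambda>y. norm ((\<lambda>(m, n). f m * g n) (x, y))) summable_on UNIV"
      using summable_on_cmult_right[OF ga, of "norm (f x)"] by (simp add: norm_mult)
  next
    show "(\<lambda>x. norm (infsum (\<lambda>y. norm ((\<lambda>(m, n). f m * g n) (x, y))) UNIV)) summable_on UNIV"
      using summable_on_cmult_left[OF fa]
      by (simp add: norm_mult infsum_cmult_right' infsum_nonneg)
  qed
  then have "(\<lambda>(m, n). f m * g n) summable_on Sigma UNIV (\<lambda>_. UNIV)"
    using summable_on_iff_abs_summable_on_complex by blast
  then have "((\<lambda>(m, n). f m * g n) has_sum (infsum f UNIV * infsum g UNIV)) (Sigma UNIV (\<lambda>_. UNIV))"
    by (rule has_sum_SigmaI[rotated 2])
      (use has_sum_cmult_right[OF has_sum_infsum[OF g]] has_sum_cmult_left[OF has_sum_infsum[OF f]]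
       in auto)
  then show ?thesis by simp
qed

lemma quadratic_le_minus_abs:
  fixes \<alpha> \<beta> x :: real
  assumes "\<alpha> > 0"
  shows "- \<alpha> * x\<^sup>2 + \<beta> * x \<le> (\<bar>\<beta>\<bar> + 1)\<^sup>2 / (4 * \<alpha>) - \<bar>x\<bar>"
proof -
  define b where "b = \<bar>\<beta>\<bar> + 1"
  have "0 \<le> \<alpha> * (\<bar>x\<bar> - b / (2 * \<alpha>))\<^sup>2" using assms by simp
  also have "\<dots> = \<alpha> * x\<^sup>2 - b * \<bar>x\<bar> + b\<^sup>2 / (4 * \<alpha>)"
    using assms by (simp add: power2_eq_square field_simps)
  finally show ?thesis
    using abs_ge_self[of "\<beta> * x"] unfolding b_def abs_mult by (simp add: algebra_simps)
qed

section \<open>Theta functions with characteristics\<close>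

definition theta_char_term :: "complex \<Rightarrow> complex \<Rightarrow> real \<Rightarrow> int \<Rightarrow> complex" where
  "theta_char_term z \<tau> a n = ep \<tau> ((of_int n + of_real a)\<^sup>2 / 2) * ep z (of_int n + of_real a)"

definition theta_char :: "complex \<Rightarrow> complex \<Rightarrow> real \<Rightarrow> complex" where
  "theta_char z \<tau> a = infsum (theta_char_term z \<tau> a) UNIV"

lemma norm_theta_char_term:
  "norm (theta_char_term z \<tau> a n) =
     exp (- pi * Im \<tau> * (real_of_int n + a)\<^sup>2 - 2 * pi * Im z * (real_of_int n + a))"
proof -
  have "(of_int n + of_real a :: complex) = of_real (real_of_int n + a)" by simp
  then show ?thesis
    unfolding theta_char_term_def norm_mult norm_ep exp_add[symmetric]
    by (simp only:) (simp add: field_simps power2_eq_square)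
qed

lemma summable_on_theta_char_term:
  assumes "Im \<tau> > 0"
  shows "theta_char_term z \<tau> a summable_on UNIV"
proof (rule summable_on_int_exp_decay)
  fix n :: int
  define K where "K = (\<bar>- 2 * pi * Im z\<bar> + 1)\<^sup>2 / (4 * (pi * Im \<tau>))"
  have "- (pi * Im \<tau>) * (real_of_int n + a)\<^sup>2 + (- 2 * pi * Im z) * (real_of_int n + a)
        \<le> K - \<bar>real_of_int n + a\<bar>"
    unfolding K_def by (rule quadratic_le_minus_abs) (use assms in simp)
  then have "norm (theta_char_term z \<tau> a n) \<le> exp (K + \<bar>a\<bar> - \<bar>real_of_int n\<bar>)"
    unfolding norm_theta_char_term by (simp add: algebra_simps)
  then show "norm (theta_char_term z \<tau> a n) \<le> exp (K + \<bar>a\<bar>) * exp (- \<bar>real_of_int n\<bar>)"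
    by (simp add: exp_add[symmetric])
qed

lemma has_sum_theta_char: "Im \<tau> > 0 \<Longrightarrow> (theta_char_term z \<tau> a has_sum theta_char z \<tau> a) UNIV"
  unfolding theta_char_def using summable_on_theta_char_term by (rule has_sum_infsum)

lemma theta_char_term_mult:
  "theta_char_term x \<tau> a (k + l + e) * theta_char_term y \<tau> b (k - l) =
   theta_char_term (x + y) (2 * \<tau>) ((a + b + of_int e) / 2) k *
   theta_char_term (x - y) (2 * \<tau>) ((a - b + of_int e) / 2) l"
  unfolding theta_char_term_def ep_def mult_exp_exp
  by (rule arg_cong[where f = exp]) (simp add: field_simps power2_eq_square)

text \<open>The pairs \<open>(m, n)\<close> with \<open>m + n\<close> of parity \<open>e\<close> are exactly the \<open>(k + l + e, k - l)\<close>.\<close>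

lemma int_pair_parity_partition:
  shows "inj (\<lambda>(k, l). (k + l + e, k - l :: int))"
    and "range (\<lambda>(k, l). (k + l, k - l :: int)) \<inter> range (\<lambda>(k, l). (k + l + 1, k - l)) = {}"
    and "range (\<lambda>(k, l). (k + l, k - l :: int)) \<union> range (\<lambda>(k, l). (k + l + 1, k - l)) = UNIV"
proof -
  show "inj (\<lambda>(k, l). (k + l + e, k - l :: int))" unfolding inj_def by auto
  show "range (\<lambda>(k, l). (k + l, k - l :: int)) \<inter> range (\<lambda>(k, l). (k + l + 1, k - l)) = {}"
    by (auto, presburger)
  have "(m, n) \<in> range (\<lambda>(k, l). (k + l, k - l)) \<union> range (\<lambda>(k, l). (k + l + 1, k - l))"
    for m n :: int
  proof (cases "even (m + n)")
    case True
    then obtain k where "m + n = 2 * k" by (rule evenE)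
    then have "(m, n) = (\<lambda>(k, l). (k + l, k - l)) (k, m - k)" by simp
    then show ?thesis by blast
  next
    case False
    then obtain k where "m + n = 2 * k + 1" by (rule oddE)
    then have "(m, n) = (\<lambda>(k, l). (k + l + 1, k - l)) (k, m - k - 1)" by simp
    then show ?thesis by blast
  qed
  then show "range (\<lambda>(k, l). (k + l, k - l :: int)) \<union> range (\<lambda>(k, l). (k + l + 1, k - l)) = UNIV"
    by auto
qed

lemma theta_char_mult:
  assumes "Im \<tau> > 0"
  shows "theta_char x \<tau> a * theta_char y \<tau> b =
    theta_char (x + y) (2 * \<tau>) ((a + b) / 2) * theta_char (x - y) (2 * \<tau>) ((a - b) / 2) +
    theta_char (x + y) (2 * \<tau>) ((a + b + 1) / 2) * theta_char (x - y) (2 * \<tau>) ((a - b + 1) / 2)"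
proof -
  define F where "F = (\<lambda>(m::int, n::int). theta_char_term x \<tau> a m * theta_char_term y \<tau> b n)"
  define P where "P e = theta_char (x + y) (2 * \<tau>) ((a + b + of_int e) / 2) *
    theta_char (x - y) (2 * \<tau>) ((a - b + of_int e) / 2)" for e :: int
  have part: "(F has_sum P e) (range (\<lambda>(k, l). (k + l + e, k - l)))" for e
  proof -
    have "F \<circ> (\<lambda>(k, l). (k + l + e, k - l)) =
      (\<lambda>(k, l). theta_char_term (x + y) (2 * \<tau>) ((a + b + of_int e) / 2) k *
        theta_char_term (x - y) (2 * \<tau>) ((a - b + of_int e) / 2) l)"
      unfolding F_def by (auto simp: theta_char_term_mult)
    moreover have "Im (2 * \<tau>) > 0" using assms by simp
    ultimately show ?thesis
      unfolding P_def theta_char_def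
      by (simp add: has_sum_reindex[OF int_pair_parity_partition(1)] has_sum_product
          summable_on_theta_char_term)
  qed
  have "(F has_sum (P 0 + P 1)) UNIV"
    using has_sum_Un_disjoint[OF part[of 0] part[of 1]] int_pair_parity_partition(2,3) by simp
  moreover have "(F has_sum (theta_char x \<tau> a * theta_char y \<tau> b)) UNIV"
    unfolding F_def theta_char_def
    using has_sum_product[OF summable_on_theta_char_term[OF assms] summable_on_theta_char_term[OF assms]]
    by simp
  ultimately show ?thesis unfolding P_def using has_sum_unique by fastforce
qed

lemma theta_char_char_add_1: "theta_char z \<tau> (a + 1) = theta_char z \<tau> a"
proof -
  have "theta_char_term z \<tau> a (n + 1) = theta_char_term z \<tau> (a + 1) n" for n
    unfolding theta_char_term_def by (simp add: add_ac)
  then show ?thesis unfolding theta_char_def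
    by (intro infsum_reindex_bij_witness[of UNIV "\<lambda>n. n - 1" "\<lambda>n. n + 1"]) simp_all
qed

lemma theta_char_add_1: "theta_char (z + 1) \<tau> a = cis (2 * pi * a) * theta_char z \<tau> a"
proof -
  have "ep 1 (of_int n + of_real a) = cis (2 * pi * a)" for n
    using ep_add[of 1 "of_int n" "of_real a"] ep_one_of_int[of n] ep_of_real[of 1 a] by simp
  then have "theta_char_term (z + 1) \<tau> a = (\<lambda>n. cis (2 * pi * a) * theta_char_term z \<tau> a n)"
    unfolding theta_char_term_def ep_add_base[symmetric] by auto
  then show ?thesis unfolding theta_char_def by (simp add: infsum_cmult_right')
qed

lemma theta_char_dissection:
  assumes "Im \<tau> > 0"
  shows "theta_char z \<tau> a = theta_char (2 * z) (4 * \<tau>) (a / 2) + theta_char (2 * z) (4 * \<tau>) ((a + 1) / 2)"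
proof -
  have t4: "Im (4 * \<tau>) > 0" using assms by simp
  have "theta_char_term z \<tau> a (2 * k) = theta_char_term (2 * z) (4 * \<tau>) (a / 2) k"
    "theta_char_term z \<tau> a (2 * k + 1) = theta_char_term (2 * z) (4 * \<tau>) ((a + 1) / 2) k" for k
    unfolding theta_char_term_def ep_def mult_exp_exp
    by (rule arg_cong[where f = exp], simp add: field_simps power2_eq_square)+
  then have "(theta_char_term z \<tau> a has_sum theta_char (2 * z) (4 * \<tau>) (a / 2)) (range (\<lambda>k. 2 * k))"
    and "(theta_char_term z \<tau> a has_sum theta_char (2 * z) (4 * \<tau>) ((a + 1) / 2)) (range (\<lambda>k. 2 * k + 1))"
    by (simp_all add: has_sum_reindex inj_on_def o_def has_sum_theta_char[OF t4])
  moreover have "range (\<lambda>k::int. 2 * k) \<inter> range (\<lambda>k. 2 * k + 1) = {}" by auto presburger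
  moreover have "range (\<lambda>k::int. 2 * k) \<union> range (\<lambda>k. 2 * k + 1) = UNIV"
  proof -
    have "n \<in> range (\<lambda>k::int. 2 * k) \<union> range (\<lambda>k. 2 * k + 1)" for n :: int
      by (cases "even n") (auto elim!: evenE oddE)
    then show ?thesis by auto
  qed
  ultimately have "(theta_char_term z \<tau> a has_sum
      (theta_char (2 * z) (4 * \<tau>) (a / 2) + theta_char (2 * z) (4 * \<tau>) ((a + 1) / 2))) UNIV"
    by (metis has_sum_Un_disjoint)
  then show ?thesis using has_sum_theta_char[OF assms] has_sum_unique by blast
qed

lemma theta_char_half_half_eq_0: "theta_char (1/2) \<tau> (1/2) = 0"
proof -
  have "theta_char_term (1/2) \<tau> (1/2) (- n - 1) = - theta_char_term (1/2) \<tau> (1/2) n" for n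
  proof -
    have "ep \<tau> ((of_int (- n - 1) + 1/2)\<^sup>2 / 2) = ep \<tau> ((of_int n + 1/2)\<^sup>2 / 2)"
      by (rule ep_eqI) (simp add: field_simps power2_eq_square)
    moreover have "ep (1/2) (of_int (- n - 1) + 1/2) =
        ep (1/2) (of_int n + 1/2) * ep (1/2) (-1) * ep (1/2) (2 * of_int (- n))"
      unfolding ep_add by (rule ep_eqI) (simp add: field_simps)
    moreover have "ep (1/2) (2 * of_int (- n)) = 1"
      using ep_eqI[of "2 * of_int (- n)" "1/2" "of_int (- n)" 1] ep_one_of_int[of "- n"] by simp
    moreover have "ep (1/2) (-1) = -1" using ep_of_real[of "1/2" "-1"] by (simp add: complex_eq_iff)
    ultimately show ?thesis unfolding theta_char_term_def by simp
  qed
  then have "theta_char (1/2) \<tau> (1/2) = - theta_char (1/2) \<tau> (1/2)"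
    unfolding theta_char_def infsum_uminus[symmetric]
    by (intro infsum_reindex_bij_witness[of UNIV "\<lambda>n. - n - 1" "\<lambda>n. - n - 1"]) auto
  then show ?thesis by simp
qed

lemma theta3_eq_theta_char: "theta3 z \<tau> = theta_char z \<tau> 0"
  unfolding theta3_def theta_char_def theta_char_term_def by simp

lemma theta2_eq_theta_char: "theta2 z \<tau> = theta_char z \<tau> (1/2)"
  unfolding theta2_def theta_char_def theta_char_term_def by simp

lemma theta4_eq_theta_char: "theta4 z \<tau> = theta_char (z + 1/2) \<tau> 0"
proof -
  have "(-1) powi n * ep \<tau> ((of_int n)\<^sup>2 / 2) * ep z (of_int n) = theta_char_term (z + 1/2) \<tau> 0 n" for n
    unfolding theta_char_term_def ep_add_base[symmetric] ep_half_of_int[symmetric] by simp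
  then show ?thesis unfolding theta4_def theta_char_def by simp
qed

lemma theta1_eq_theta_char: "theta1 z \<tau> = - theta_char (z + 1/2) \<tau> (1/2)"
proof -
  have "ep (1/2) (of_int n + 1/2) = \<i> * (-1) powi n" for n
    using ep_add[of "1/2" "of_int n" "1/2"] ep_half_of_int[of n] ep_of_real[of "1/2" "1/2"]
    by (simp add: complex_eq_iff)
  then have "(-1) powi n * ep \<tau> ((of_int n + 1/2)\<^sup>2 / 2) * ep z (of_int n + 1/2) =
      - \<i> * theta_char_term (z + 1/2) \<tau> (1/2) n" for n
    unfolding theta_char_term_def ep_add_base[symmetric] by (simp add: algebra_simps)
  then have "theta1 z \<tau> = - \<i> * infsum (\<lambda>n. - \<i> * theta_char_term (z + 1/2) \<tau> (1/2) n) UNIV"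
    unfolding theta1_def by simp
  then show ?thesis unfolding theta_char_def infsum_cmult_right' by simp
qed

lemma theta1_zero [simp]: "theta1 0 \<tau> = 0"
  using theta_char_half_half_eq_0 by (simp add: theta1_eq_theta_char)

lemma theta3_shift_eq_theta_char:
  "ep \<tau> (of_real c ^ 2 / 16) * ep z (of_real c / 4) * theta3 (z + of_real c * \<tau> / 2) (2 * \<tau>) =
     theta_char z (2 * \<tau>) (c / 4)"
proof -
  have "theta_char_term z (2 * \<tau>) (c / 4) = (\<lambda>n. ep \<tau> (of_real c ^ 2 / 16) * ep z (of_real c / 4) *
      (ep (2 * \<tau>) ((of_int n)\<^sup>2 / 2) * ep (z + of_real c * \<tau> / 2) (of_int n)))"
    unfolding theta_char_term_def ep_def mult_exp_exp
    by (rule ext, rule arg_cong[where f = exp]) (simp add: field_simps power2_eq_square)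
  then show ?thesis
    unfolding theta_char_def theta3_def by (simp add: infsum_cmult_right')
qed

lemma theta_duplication:
  assumes "Im \<tau> > 0"
  shows "theta3 z (2 * \<tau>) ^ 2 + theta2 z (2 * \<tau>) ^ 2 = theta3 z \<tau> * theta3 0 \<tau>"
    and "theta3 z (2 * \<tau>) ^ 2 - theta2 z (2 * \<tau>) ^ 2 = theta4 z \<tau> * theta4 0 \<tau>"
    and "theta4 z (2 * \<tau>) ^ 2 + theta1 z (2 * \<tau>) ^ 2 = theta4 z \<tau> * theta3 0 \<tau>"
    and "theta4 z (2 * \<tau>) ^ 2 - theta1 z (2 * \<tau>) ^ 2 = theta3 z \<tau> * theta4 0 \<tau>"
    and "2 * theta3 z (2 * \<tau>) * theta2 z (2 * \<tau>) = theta2 z \<tau> * theta2 0 \<tau>"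
    and "2 * theta4 z (2 * \<tau>) * theta1 z (2 * \<tau>) = theta1 z \<tau> * theta2 0 \<tau>"
proof -
  note mult = theta_char_mult[OF assms]
  have shift: "theta_char (\<zeta> + 1) \<tau>' 0 = theta_char \<zeta> \<tau>' 0"
    "theta_char (\<zeta> + 1) \<tau>' (1/2) = - theta_char \<zeta> \<tau>' (1/2)" for \<zeta> \<tau>'
    using theta_char_add_1[of \<zeta> \<tau>' 0] theta_char_add_1[of \<zeta> \<tau>' "1/2"] by simp_all
  have shift': "theta_char (z - 1/2) \<tau>' 0 = theta_char (z + 1/2) \<tau>' 0"
    "theta_char (z - 1/2) \<tau>' (1/2) = - theta_char (z + 1/2) \<tau>' (1/2)" for \<tau>'
    using shift[of "z - 1/2" \<tau>'] by (simp_all add: add.commute)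
  have one: "theta_char \<zeta> \<tau>' 1 = theta_char \<zeta> \<tau>' 0" for \<zeta> \<tau>'
    using theta_char_char_add_1[of \<zeta> \<tau>' 0] by simp
  note to_char = theta1_eq_theta_char theta2_eq_theta_char theta3_eq_theta_char theta4_eq_theta_char
  show "theta3 z (2 * \<tau>) ^ 2 + theta2 z (2 * \<tau>) ^ 2 = theta3 z \<tau> * theta3 0 \<tau>"
    using mult[of z 0 0 0] unfolding to_char by (simp add: power2_eq_square)
  show "theta3 z (2 * \<tau>) ^ 2 - theta2 z (2 * \<tau>) ^ 2 = theta4 z \<tau> * theta4 0 \<tau>"
    using mult[of "z + 1/2" 0 "1/2" 0] unfolding to_char by (simp add: power2_eq_square add.assoc shift)
  show "theta4 z (2 * \<tau>) ^ 2 + theta1 z (2 * \<tau>) ^ 2 = theta4 z \<tau> * theta3 0 \<tau>"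
    using mult[of "z + 1/2" 0 0 0] unfolding to_char by (simp add: power2_eq_square)
  show "theta4 z (2 * \<tau>) ^ 2 - theta1 z (2 * \<tau>) ^ 2 = theta3 z \<tau> * theta4 0 \<tau>"
    using mult[of z 0 "1/2" 0] unfolding to_char by (simp add: power2_eq_square shift')
  show "2 * theta3 z (2 * \<tau>) * theta2 z (2 * \<tau>) = theta2 z \<tau> * theta2 0 \<tau>"
    using mult[of z "1/2" 0 "1/2"] unfolding to_char by (simp add: one mult.commute)
  show "2 * theta4 z (2 * \<tau>) * theta1 z (2 * \<tau>) = theta1 z \<tau> * theta2 0 \<tau>"
    using mult[of "z + 1/2" "1/2" 0 "1/2"] unfolding to_char by (simp add: one mult.commute)
qed

lemma jacobi_quartic_identity:
  assumes "Im \<tau> > 0"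
  shows "theta3 0 \<tau> ^ 4 = theta2 0 \<tau> ^ 4 + theta4 0 \<tau> ^ 4"
proof -
  note dup = theta_duplication[OF assms, of 0]
  have "theta3 0 \<tau> ^ 4 - theta4 0 \<tau> ^ 4 = 4 * theta3 0 (2 * \<tau>) ^ 2 * theta2 0 (2 * \<tau>) ^ 2"
    using dup(1,2) by (simp add: power2_eq_square power4_eq_xxxx) algebra
  also have "\<dots> = theta2 0 \<tau> ^ 4"
    using dup(5) by (simp add: power2_eq_square power4_eq_xxxx) algebra
  finally show ?thesis by (simp add: algebra_simps)
qed

lemma theta3_half_shift_duplication:
  fixes \<tau> z :: complex
  assumes \<tau>: "Im \<tau> > 0"
  defines "f \<equiv> ep \<tau> (1/16) * ep z (1/4) * theta3 (z + \<tau> / 2) (2 * \<tau>)"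
    and "e \<equiv> ep \<tau> (1/16) * ep z (-1/4) * theta3 (z - \<tau> / 2) (2 * \<tau>)"
  shows "f ^ 2 + e ^ 2 = theta2 z \<tau> * theta3 0 \<tau>"
    and "f ^ 2 - e ^ 2 = \<i> * theta1 z \<tau> * theta4 0 \<tau>"
proof -
  define h where "h \<zeta> a = theta_char \<zeta> (4 * \<tau>) a" for \<zeta> a
  have f: "f = theta_char z (2 * \<tau>) (1/4)" and e: "e = theta_char z (2 * \<tau>) (-1/4)"
    unfolding f_def e_def using theta3_shift_eq_theta_char[of \<tau> 1 z] theta3_shift_eq_theta_char[of \<tau> "-1" z]
    by simp_all
  have t2: "Im (2 * \<tau>) > 0" using \<tau> by simp
  have f2: "f ^ 2 = h (2 * z) (1/4) * h 0 0 + h (2 * z) (-1/4) * h 0 (1/2)"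
    using theta_char_mult[OF t2, of z "1/4" z "1/4"] theta_char_char_add_1[of "2 * z" "4 * \<tau>" "-1/4"]
    unfolding f h_def by (simp add: power2_eq_square)
  have e2: "e ^ 2 = h (2 * z) (-1/4) * h 0 0 + h (2 * z) (1/4) * h 0 (1/2)"
    using theta_char_mult[OF t2, of z "-1/4" z "-1/4"] unfolding e h_def by (simp add: power2_eq_square)
  have "theta2 z \<tau> = h (2 * z) (1/4) + h (2 * z) (-1/4)"
    and "theta3 0 \<tau> = h 0 0 + h 0 (1/2)"
    using theta_char_dissection[OF \<tau>, of z "1/2"] theta_char_dissection[OF \<tau>, of 0 0]
      theta_char_char_add_1[of "2 * z" "4 * \<tau>" "-1/4"]
    unfolding h_def theta2_eq_theta_char theta3_eq_theta_char by simp_all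
  then show "f ^ 2 + e ^ 2 = theta2 z \<tau> * theta3 0 \<tau>"
    unfolding f2 e2 by (simp add: algebra_simps)
  have \<theta>4: "theta4 0 \<tau> = h 0 0 - h 0 (1/2)"
    using theta_char_dissection[OF \<tau>, of "1/2" 0]
      theta_char_add_1[of 0 "4 * \<tau>" 0] theta_char_add_1[of 0 "4 * \<tau>" "1/2"]
    unfolding h_def theta4_eq_theta_char by simp
  have \<theta>1: "theta1 z \<tau> = \<i> * h (2 * z) (-1/4) - \<i> * h (2 * z) (1/4)"
    using theta_char_dissection[OF \<tau>, of "z + 1/2" "1/2"]
      theta_char_add_1[of "2 * z" "4 * \<tau>" "1/4"] theta_char_add_1[of "2 * z" "4 * \<tau>" "-1/4"]
      theta_char_char_add_1[of "2 * z + 1" "4 * \<tau>" "-1/4"]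
    unfolding h_def theta1_eq_theta_char by (simp add: algebra_simps complex_eq_iff)
  show "f ^ 2 - e ^ 2 = \<i> * theta1 z \<tau> * theta4 0 \<tau>"
    unfolding f2 e2 \<theta>1 \<theta>4 using i_squared by algebra
qed

section \<open>The Jacobi triple product\<close>

definition qpoch :: "complex \<Rightarrow> nat \<Rightarrow> complex" where
  "qpoch q n = (\<Prod>i<n. 1 - q ^ Suc i)"

definition qpoch_inf :: "complex \<Rightarrow> complex" where
  "qpoch_inf q = prodinf (\<lambda>i. 1 - q ^ Suc i)"

lemma qpoch_0 [simp]: "qpoch q 0 = 1"
  unfolding qpoch_def by simp

lemma qpoch_Suc: "qpoch q (Suc n) = qpoch q n * (1 - q ^ Suc n)"
  unfolding qpoch_def by simp

lemma norm_power_less_1: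
  fixes q :: complex
  assumes "norm q < 1" and "n > 0"
  shows "norm (q ^ n) < 1"
  using assms by (simp add: norm_power power_less_one_iff)

lemma one_minus_power_Suc_nonzero: "norm (q::complex) < 1 \<Longrightarrow> 1 - q ^ Suc n \<noteq> 0"
  using norm_power_less_1[of q "Suc n"] by (auto simp del: power_Suc)

lemma qpoch_nonzero: "norm q < 1 \<Longrightarrow> qpoch q n \<noteq> 0"
  unfolding qpoch_def using one_minus_power_Suc_nonzero by (auto simp del: power_Suc)

lemma convergent_prod_qpoch: "norm (q::complex) < 1 \<Longrightarrow> convergent_prod (\<lambda>i. 1 - q ^ Suc i)"
proof -
  assume q: "norm q < 1"
  have "summable (\<lambda>k. norm q * norm q ^ k)" using q by (intro summable_mult summable_geometric) simp
  then have "summable (\<lambda>k. norm (- (q ^ Suc k)))" by (simp add: norm_power norm_mult)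
  moreover have "- (q ^ Suc k) \<noteq> -1" for k
    using one_minus_power_Suc_nonzero[OF q, of k] by (auto simp del: power_Suc)
  ultimately have "convergent_prod (\<lambda>k. 1 + - (q ^ Suc k))"
    by (rule summable_imp_convergent_prod_complex)
  then show ?thesis by simp
qed

lemma qpoch_tendsto: "norm q < 1 \<Longrightarrow> qpoch q \<longlonglongrightarrow> qpoch_inf q"
  unfolding qpoch_def qpoch_inf_def
  using has_prod_imp_tendsto'[OF convergent_prod_has_prod[OF convergent_prod_qpoch]] by simp

lemma qpoch_inf_nonzero: "norm q < 1 \<Longrightarrow> qpoch_inf q \<noteq> 0"
  unfolding qpoch_inf_def using prodinf_nonzero convergent_prod_qpoch one_minus_power_Suc_nonzero
  by blast

lemma qpoch_tendsto_compose:
  "norm q < 1 \<Longrightarrow> filterlim g sequentially sequentially \<Longrightarrow> (\<lambda>n. qpoch q (g n)) \<longlonglongrightarrow> qpoch_inf q"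
  using filterlim_compose[OF qpoch_tendsto] by blast

lemma LIMSEQ_nonzero_imp_norm_bounded_below:
  fixes X :: "nat \<Rightarrow> 'a::real_normed_vector"
  assumes "X \<longlonglongrightarrow> L" "L \<noteq> 0" "\<And>n. X n \<noteq> 0"
  obtains c where "c > 0" "\<And>n. c \<le> norm (X n)"
proof -
  have "eventually (\<lambda>n. norm (X n) > norm L / 2) sequentially"
    using tendsto_norm[OF assms(1)] assms(2) by (intro order_tendstoD) auto
  then obtain N where N: "\<And>n. n \<ge> N \<Longrightarrow> norm (X n) > norm L / 2"
    unfolding eventually_sequentially by auto
  define c where "c = Min (insert (norm L / 2) ((\<lambda>n. norm (X n)) ` {..<N}))"
  have "c > 0" unfolding c_def using assms(2,3) by (subst Min_gr_iff) auto
  moreover have "c \<le> norm (X n)" for n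
  proof (cases "n < N")
    case True then show ?thesis unfolding c_def by (intro Min_le) auto
  next
    case False
    then have "c \<le> norm L / 2" unfolding c_def by (intro Min_le) auto
    with N[of n] False show ?thesis by auto
  qed
  ultimately show ?thesis using that by blast
qed

definition qbinomial :: "complex \<Rightarrow> nat \<Rightarrow> nat \<Rightarrow> complex" where
  "qbinomial q N k = (if k \<le> N then qpoch q N / (qpoch q k * qpoch q (N - k)) else 0)"

lemma qbinomial_symmetric: "k \<le> N \<Longrightarrow> qbinomial q N (N - k) = qbinomial q N k"
  unfolding qbinomial_def by (simp add: mult.commute)

lemma qbinomial_bounded:
  assumes "norm q < 1"
  obtains C where "\<And>N k. norm (qbinomial q N k) \<le> C"
proof -
  obtain c where c: "c > 0" "\<And>n. c \<le> norm (qpoch q n)"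
    using LIMSEQ_nonzero_imp_norm_bounded_below qpoch_tendsto qpoch_inf_nonzero qpoch_nonzero assms
    by metis
  obtain B where B: "\<And>n. norm (qpoch q n) \<le> B"
    using convergent_imp_bounded[OF qpoch_tendsto[OF assms]] unfolding bounded_iff by auto
  have "B \<ge> 0" using B[of 0] by simp
  have "norm (qbinomial q N k) \<le> B / (c * c)" for N k
  proof (cases "k \<le> N")
    case True
    then have "norm (qbinomial q N k) = norm (qpoch q N) / (norm (qpoch q k) * norm (qpoch q (N - k)))"
      unfolding qbinomial_def by (simp add: norm_divide norm_mult)
    also have "\<dots> \<le> B / (c * c)"
      using c B \<open>B \<ge> 0\<close> by (intro frac_le mult_mono) auto
    finally show ?thesis .
  qed (use \<open>B \<ge> 0\<close> c in \<open>simp add: qbinomial_def\<close>)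
  then show ?thesis using that by blast
qed

lemma qbinomial_central_tendsto:
  assumes "norm q < 1"
  shows "(\<lambda>n. qbinomial q (n + n) (j + n)) \<longlonglongrightarrow> 1 / qpoch_inf q"
proof -
  have "(\<lambda>n. qpoch q (n + n) / (qpoch q (n + j) * qpoch q (n - j))) \<longlonglongrightarrow>
      qpoch_inf q / (qpoch_inf q * qpoch_inf q)"
    using qpoch_inf_nonzero[OF assms]
    by (intro tendsto_intros qpoch_tendsto_compose[OF assms] filterlim_subseq
        filterlim_add_const_nat_at_top filterlim_minus_const_nat_at_top) (auto simp: strict_mono_def)
  moreover have "eventually (\<lambda>n. qpoch q (n + n) / (qpoch q (n + j) * qpoch q (n - j)) =
      qbinomial q (n + n) (j + n)) sequentially"
    using eventually_ge_at_top[of j]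
    by eventually_elim (simp add: qbinomial_def add.commute)
  ultimately show ?thesis
    using qpoch_inf_nonzero[OF assms] by (auto dest: Lim_transform_eventually)
qed

lemma qbinomial_Suc_Suc:
  assumes q: "norm q < 1" and "k \<le> N"
  shows "qbinomial q (Suc N) (Suc k) = qbinomial q N (Suc k) + q ^ (N - k) * qbinomial q N k"
proof (cases "k = N")
  case True
  then show ?thesis using qpoch_nonzero[OF q] by (simp add: qbinomial_def)
next
  case False
  define M where "M = N - Suc k"
  have N: "N = k + Suc M" using assms(2) False unfolding M_def by simp
  define a b u v where "a = qpoch q k" "b = qpoch q M" "u = 1 - q ^ Suc k" "v = 1 - q ^ Suc M"
  have nz: "a \<noteq> 0" "b \<noteq> 0" "u \<noteq> 0" "v \<noteq> 0"
    unfolding a_b_u_v_def using qpoch_nonzero[OF q] one_minus_power_Suc_nonzero[OF q]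
    by (auto simp del: power_Suc)
  have "1 - q ^ Suc N = v + q ^ Suc M * u"
    unfolding N a_b_u_v_def by (simp add: algebra_simps power_add)
  then have "qbinomial q (Suc N) (Suc k) = qpoch q N * (v + q ^ Suc M * u) / (a * u * (b * v))"
    using N unfolding qbinomial_def a_b_u_v_def by (simp add: qpoch_Suc)
  also have "\<dots> = qpoch q N / (a * u * b) + q ^ Suc M * (qpoch q N / (a * (b * v)))"
    using nz by (simp add: field_simps)
  also have "\<dots> = qbinomial q N (Suc k) + q ^ (N - k) * qbinomial q N k"
    using N unfolding qbinomial_def a_b_u_v_def by (simp add: qpoch_Suc)
  finally show ?thesis .
qed

lemma Suc_choose_2: "Suc k choose 2 = (k choose 2) + k"
  by (simp add: numeral_2_eq_2)

lemma choose_2_times_2: "2 * (m choose 2) + m = m * m"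
  by (induction m) (simp_all add: Suc_choose_2 algebra_simps)

theorem qbinomial_theorem:
  assumes q: "norm q < 1"
  shows "(\<Prod>i<N. 1 + q ^ i * t) = (\<Sum>k\<le>N. q ^ (k choose 2) * qbinomial q N k * t ^ k)"
proof (induction N)
  case 0
  then show ?case using qpoch_nonzero[OF q] by (simp add: qbinomial_def numeral_2_eq_2)
next
  case (Suc N)
  define c where "c M k = q ^ (k choose 2) * qbinomial q M k" for M k
  have c0: "c M 0 = 1" for M
    using qpoch_nonzero[OF q] by (simp add: c_def qbinomial_def numeral_2_eq_2)
  have c_beyond: "c N (Suc N) = 0" by (simp add: c_def qbinomial_def)
  have pascal: "c (Suc N) (Suc k) = c N (Suc k) + q ^ N * c N k" if "k \<le> N" for k
  proof -
    have "q ^ k * q ^ (N - k) = q ^ N" using that by (simp flip: power_add)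
    then show ?thesis
      unfolding c_def qbinomial_Suc_Suc[OF q that] Suc_choose_2 power_add by (simp add: algebra_simps)
  qed
  have shift: "(\<Sum>k\<le>N. c N k * t ^ k) = 1 + (\<Sum>k\<le>N. c N (Suc k) * t ^ Suc k)"
    using sum.atMost_Suc_shift[of "\<lambda>k. c N k * t ^ k" N] c0 c_beyond by simp
  have "(\<Prod>i<Suc N. 1 + q ^ i * t) = (\<Sum>k\<le>N. c N k * t ^ k) * (1 + q ^ N * t)"
    using Suc.IH by (simp add: c_def)
  also have "\<dots> = (\<Sum>k\<le>N. c N k * t ^ k) + (\<Sum>k\<le>N. q ^ N * c N k * t ^ Suc k)"
    by (simp add: ring_distribs sum_distrib_left sum.distrib mult_ac)
  also have "\<dots> = 1 + (\<Sum>k\<le>N. (c N (Suc k) + q ^ N * c N k) * t ^ Suc k)"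
    unfolding shift by (simp add: sum.distrib algebra_simps)
  also have "\<dots> = 1 + (\<Sum>k\<le>N. c (Suc N) (Suc k) * t ^ Suc k)"
    using pascal by simp
  also have "\<dots> = (\<Sum>k\<le>Suc N. c (Suc N) k * t ^ k)"
    by (subst sum.atMost_Suc_shift) (simp add: c0)
  finally show ?case by (simp add: c_def)
qed

lemma prod_lessThan_double:
  fixes g :: "nat \<Rightarrow> 'a::comm_monoid_mult"
  shows "(\<Prod>i<n + n. g i) = (\<Prod>m<n. g (m + n)) * (\<Prod>m<n. g (n - Suc m))"
proof -
  have "{..<n + n} = {..<n} \<union> {n..<n + n}" by auto
  then have "(\<Prod>i<n + n. g i) = (\<Prod>i<n. g i) * (\<Prod>i\<in>{n..<n + n}. g i)"
    by (simp add: prod.union_disjoint ivl_disj_int)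
  also have "(\<Prod>i\<in>{n..<n + n}. g i) = (\<Prod>m<n. g (m + n))"
    using prod.shift_bounds_nat_ivl[of g 0 n n] by (simp add: atLeast0LessThan)
  also have "(\<Prod>i<n. g i) = (\<Prod>m<n. g (n - Suc m))" by (rule prod.nat_diff_reindex[symmetric])
  finally show ?thesis by (simp add: mult.commute)
qed

lemma sum_atMost_double:
  fixes h :: "nat \<Rightarrow> 'a::comm_monoid_add"
  shows "(\<Sum>k\<le>n + n. h k) = (\<Sum>j\<le>n. h (j + n)) + (\<Sum>j<n. h (n - Suc j))"
proof -
  have "{..n + n} = {..<n} \<union> {n..n + n}" by auto
  then have "(\<Sum>k\<le>n + n. h k) = (\<Sum>k<n. h k) + (\<Sum>k\<in>{n..n + n}. h k)"
    by (simp add: sum.union_disjoint ivl_disj_int)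
  also have "(\<Sum>k\<in>{n..n + n}. h k) = (\<Sum>j\<le>n. h (j + n))"
    using sum.shift_bounds_cl_nat_ivl[of h 0 n n] by (simp add: atLeast0AtMost)
  also have "(\<Sum>k<n. h k) = (\<Sum>j<n. h (n - Suc j))" by (rule sum.nat_diff_reindex[symmetric])
  finally show ?thesis by (simp add: add.commute)
qed

lemma prod_odd_powers: "(\<Prod>m<n. (x::'a::comm_monoid_mult) ^ (2 * m + 1)) = x ^ (n * n)"
proof (induction n)
  case (Suc n)
  have "(\<Prod>m<Suc n. x ^ (2 * m + 1)) = x ^ (n * n) * x ^ (2 * n + 1)" using Suc by simp
  also have "\<dots> = x ^ (n * n + (2 * n + 1))" by (simp only: power_add)
  also have "n * n + (2 * n + 1) = Suc n * Suc n" by simp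
  finally show ?case .
qed simp

definition triple_prod :: "complex \<Rightarrow> complex \<Rightarrow> nat \<Rightarrow> complex" where
  "triple_prod x w n = (\<Prod>m<n. (1 + x ^ (2 * m + 1) * w) * (1 + x ^ (2 * m + 1) / w))"

text \<open>Rothe's theorem for \<open>2n\<close> factors with \<open>q = x\<^sup>2\<close> and \<open>t = w x\<^bsup>1-2n\<^esup>\<close> becomes the
  finite triple product: the upper \<open>n\<close> factors are the \<open>1 + x\<^bsup>2m+1\<^esup> w\<close> and the lower \<open>n\<close>
  ones are the \<open>1 + x\<^bsup>2m+1\<^esup>/w\<close> times \<open>w/x\<^bsup>2m+1\<^esup>\<close>.\<close>

lemma triple_prod_eq_rescaled_prod:
  fixes x w :: complex
  assumes x: "x \<noteq> 0" and w: "w \<noteq> 0"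
  shows "(\<Prod>i<n + n. 1 + (x\<^sup>2) ^ i * (w * x / x ^ (n + n))) = w ^ n / x ^ (n * n) * triple_prod x w n"
proof -
  have "x ^ (n + n) = x ^ (2 * (n - Suc m)) * x ^ (2 * m + 1) * x" if "m < n" for m
  proof -
    have "n + n = 2 * (n - Suc m) + (2 * m + 1) + 1" using that by simp
    then show ?thesis by (metis power_add power_one_right)
  qed
  then have lower: "1 + (x\<^sup>2) ^ (n - Suc m) * (w * x / x ^ (n + n)) =
      w / x ^ (2 * m + 1) * (1 + x ^ (2 * m + 1) / w)" if "m < n" for m
    using that x w by (simp add: power_mult[symmetric] field_simps)
  have upper: "1 + (x\<^sup>2) ^ (m + n) * (w * x / x ^ (n + n)) = 1 + x ^ (2 * m + 1) * w" for m
    using x by (simp add: power_mult[symmetric] power_add field_simps mult_2 mult_2_right)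
  have "(\<Prod>i<n + n. 1 + (x\<^sup>2) ^ i * (w * x / x ^ (n + n))) =
      (\<Prod>m<n. 1 + x ^ (2 * m + 1) * w) * (\<Prod>m<n. w / x ^ (2 * m + 1) * (1 + x ^ (2 * m + 1) / w))"
    unfolding prod_lessThan_double upper using lower by simp
  also have "\<dots> = (\<Prod>m<n. w / x ^ (2 * m + 1)) * triple_prod x w n"
    unfolding triple_prod_def prod.distrib by (simp add: algebra_simps)
  also have "(\<Prod>m<n. w / x ^ (2 * m + 1)) = w ^ n / x ^ (n * n)"
    by (simp only: prod_dividef prod_odd_powers prod_constant card_lessThan)
  finally show ?thesis .
qed

lemma qbinomial_theorem_rescaled_coeffs:
  fixes x w :: complex
  assumes x: "x \<noteq> 0" and w: "w \<noteq> 0"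
  shows "(x\<^sup>2) ^ (j + n choose 2) * qbinomial (x\<^sup>2) (n + n) (j + n) * (w * x / x ^ (n + n)) ^ (j + n) =
      w ^ n / x ^ (n * n) * (x ^ (j * j) * w ^ j * qbinomial (x\<^sup>2) (n + n) (j + n))" (is ?upper)
    and "j < n \<Longrightarrow>
      (x\<^sup>2) ^ (n - Suc j choose 2) * qbinomial (x\<^sup>2) (n + n) (n - Suc j) *
        (w * x / x ^ (n + n)) ^ (n - Suc j) =
      w ^ n / x ^ (n * n) * (x ^ (Suc j * Suc j) / w ^ Suc j * qbinomial (x\<^sup>2) (n + n) (Suc j + n))"
proof -
  have "2 * (j + n choose 2) + (j + n) + n * n = (n + n) * (j + n) + j * j"
    using choose_2_times_2[of "j + n"] by (simp add: algebra_simps)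
  then have "x ^ (2 * (j + n choose 2)) * x ^ (j + n) * x ^ (n * n) = x ^ ((n + n) * (j + n)) * x ^ (j * j)"
    by (simp flip: power_add)
  then show ?upper
    using x w by (simp add: power_mult[symmetric] field_simps power_mult_distrib power_add)
next
  assume "j < n"
  define k where "k = n - Suc j"
  have n: "n = k + Suc j" unfolding k_def using \<open>j < n\<close> by simp
  have "2 * (k choose 2) + k + n * n = (n + n) * k + Suc j * Suc j"
    using choose_2_times_2[of k] unfolding n by (simp add: algebra_simps)
  then have "x ^ (2 * (k choose 2)) * x ^ k * x ^ (n * n) = x ^ ((n + n) * k) * x ^ (Suc j * Suc j)"
    by (simp flip: power_add)
  moreover have "w ^ n = w ^ k * w ^ Suc j" unfolding n power_add ..
  moreover have "qbinomial (x\<^sup>2) (n + n) k = qbinomial (x\<^sup>2) (n + n) (Suc j + n)"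
    using qbinomial_symmetric[of k "n + n" "x\<^sup>2"] unfolding n by simp
  ultimately show "(x\<^sup>2) ^ (n - Suc j choose 2) * qbinomial (x\<^sup>2) (n + n) (n - Suc j) *
      (w * x / x ^ (n + n)) ^ (n - Suc j) =
    w ^ n / x ^ (n * n) * (x ^ (Suc j * Suc j) / w ^ Suc j * qbinomial (x\<^sup>2) (n + n) (Suc j + n))"
    unfolding k_def[symmetric] using x w
    by (simp add: power_mult[symmetric] field_simps power_mult_distrib power_add)
qed

theorem triple_prod_finite:
  fixes x w :: complex
  assumes x: "norm x < 1" "x \<noteq> 0" and w: "w \<noteq> 0"
  shows "triple_prod x w n =
    (\<Sum>j\<le>n. x ^ (j * j) * w ^ j * qbinomial (x\<^sup>2) (n + n) (j + n)) +
    (\<Sum>j<n. x ^ (Suc j * Suc j) / w ^ Suc j * qbinomial (x\<^sup>2) (n + n) (Suc j + n))"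
proof -
  define t where "t = w * x / x ^ (n + n)"
  define c where "c k = (x\<^sup>2) ^ (k choose 2) * qbinomial (x\<^sup>2) (n + n) k * t ^ k" for k
  have "norm (x\<^sup>2) < 1" using x by (simp add: norm_power power_less_one_iff)
  have "w ^ n / x ^ (n * n) * triple_prod x w n = (\<Prod>i<n + n. 1 + (x\<^sup>2) ^ i * t)"
    unfolding t_def by (rule triple_prod_eq_rescaled_prod[OF x(2) w, symmetric])
  also have "\<dots> = (\<Sum>k\<le>n + n. c k)"
    unfolding c_def by (rule qbinomial_theorem[OF \<open>norm (x\<^sup>2) < 1\<close>])
  also have "\<dots> = w ^ n / x ^ (n * n) *
      ((\<Sum>j\<le>n. x ^ (j * j) * w ^ j * qbinomial (x\<^sup>2) (n + n) (j + n)) +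
       (\<Sum>j<n. x ^ (Suc j * Suc j) / w ^ Suc j * qbinomial (x\<^sup>2) (n + n) (Suc j + n)))"
    using qbinomial_theorem_rescaled_coeffs[OF x(2) w]
    unfolding sum_atMost_double c_def t_def by (simp add: sum_distrib_left distrib_left)
  finally show ?thesis using x(2) w by simp
qed

lemma summable_power_square_mult_power:
  fixes r c :: real
  assumes "0 \<le> r" "r < 1" "0 \<le> c"
  shows "summable (\<lambda>j. r ^ (j * j) * c ^ j)"
proof (rule summable_comparison_test_ev[OF _ summable_geometric[of "1/2"]])
  have "(\<lambda>j. r ^ j * c) \<longlonglongrightarrow> 0"
    using LIMSEQ_power_zero[of r] assms by (auto intro: tendsto_mult_left_zero)
  then have "eventually (\<lambda>j. r ^ j * c < 1/2) sequentially"
    by (rule order_tendstoD(2)) simp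
  then show "eventually (\<lambda>j. norm (r ^ (j * j) * c ^ j) \<le> (1/2) ^ j) sequentially"
  proof eventually_elim
    case (elim j)
    have "r ^ (j * j) * c ^ j = (r ^ j * c) ^ j" by (simp add: power_mult power_mult_distrib)
    then show ?case using elim assms by (simp add: power_mono)
  qed
qed simp

lemma summable_theta_series_terms:
  fixes x w :: complex
  assumes "norm x < 1" "w \<noteq> 0"
  shows "summable (\<lambda>j. norm (x ^ (j * j) * w ^ j))"
    and "summable (\<lambda>j. norm (x ^ (Suc j * Suc j) / w ^ Suc j))"
proof -
  show "summable (\<lambda>j. norm (x ^ (j * j) * w ^ j))"
    using summable_power_square_mult_power[of "norm x" "norm w"] assms by (simp add: norm_mult norm_power)
  have "summable (\<lambda>j. norm x ^ (j * j) * (1 / norm w) ^ j)"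
    using summable_power_square_mult_power[of "norm x" "1 / norm w"] assms by simp
  then have "summable (\<lambda>j. norm x ^ (Suc j * Suc j) * (1 / norm w) ^ Suc j)"
    by (subst summable_Suc_iff)
  then show "summable (\<lambda>j. norm (x ^ (Suc j * Suc j) / w ^ Suc j))"
    by (simp only: norm_divide norm_power power_one_over times_divide_eq_right mult_1_right)
qed

text \<open>The bilateral series \<open>\<Sum>\<^sub>n\<^sub>\<in>\<^sub>\<int> x\<^bsup>n\<^sup>2\<^esup> w\<^sup>n\<close>, split into \<open>n \<ge> 0\<close> and \<open>n < 0\<close>.\<close>

definition theta_series :: "complex \<Rightarrow> complex \<Rightarrow> complex" where
  "theta_series x w = (\<Sum>j. x ^ (j * j) * w ^ j) + (\<Sum>j. x ^ (Suc j * Suc j) / w ^ Suc j)"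

lemma tendsto_suminf_qbinomial_central:
  assumes q: "norm q < 1" and u: "summable (\<lambda>j. norm (u j))"
  shows "(\<lambda>n. \<Sum>j. u j * qbinomial q (n + n) (j + d + n)) \<longlonglongrightarrow> suminf u / qpoch_inf q"
proof -
  obtain C where C: "\<And>N k. norm (qbinomial q N k) \<le> C" using qbinomial_bounded[OF q] by blast
  define a where "a j n = u j * qbinomial q (n + n) (j + d + n)" for j n
  have "(\<lambda>n. a j n) \<longlonglongrightarrow> u j * (1 / qpoch_inf q)" for j
    unfolding a_def using qbinomial_central_tendsto[OF q, of "j + d"] by (intro tendsto_intros) simp
  moreover have "norm (a j n) \<le> C * norm (u j)" for j n
    unfolding a_def norm_mult using mult_right_mono[OF C norm_ge_zero] by (simp add: mult.commute)
  then have "eventually (\<lambda>(j, n). norm (a j n) \<le> C * norm (u j)) (at_top \<times>\<^sub>F sequentially)"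
    by (intro always_eventually) auto
  moreover have "summable (\<lambda>j. C * norm (u j))" using u by (rule summable_mult)
  ultimately have "(\<lambda>n. \<Sum>j. a j n) \<longlonglongrightarrow> (\<Sum>j. u j * (1 / qpoch_inf q))"
    using tannerys_theorem[of a _ sequentially] by auto
  then show ?thesis
    unfolding a_def using suminf_mult2[OF summable_norm_cancel[OF u], of "1 / qpoch_inf q"] by simp
qed

theorem triple_prod_tendsto:
  fixes x w :: complex
  assumes x: "norm x < 1" "x \<noteq> 0" and w: "w \<noteq> 0"
  shows "triple_prod x w \<longlonglongrightarrow> theta_series x w / qpoch_inf (x\<^sup>2)"
proof -
  define u v where "u j = x ^ (j * j) * w ^ j" and "v j = x ^ (Suc j * Suc j) / w ^ Suc j" for j
  have x2: "norm (x\<^sup>2) < 1" using x by (simp add: norm_power power_less_one_iff)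
  have "triple_prod x w = (\<lambda>n. (\<Sum>j. u j * qbinomial (x\<^sup>2) (n + n) (j + 0 + n)) +
      (\<Sum>j. v j * qbinomial (x\<^sup>2) (n + n) (j + 1 + n)))"
  proof
    fix n
    have "(\<Sum>j\<le>n. u j * qbinomial (x\<^sup>2) (n + n) (j + n)) =
        (\<Sum>j. u j * qbinomial (x\<^sup>2) (n + n) (j + 0 + n))"
      by (subst suminf_finite[of "{..n}"]) (auto simp: qbinomial_def)
    moreover have "(\<Sum>j<n. v j * qbinomial (x\<^sup>2) (n + n) (Suc j + n)) =
        (\<Sum>j. v j * qbinomial (x\<^sup>2) (n + n) (j + 1 + n))"
      by (subst suminf_finite[of "{..<n}"]) (auto simp: qbinomial_def)
    ultimately show "triple_prod x w n = (\<Sum>j. u j * qbinomial (x\<^sup>2) (n + n) (j + 0 + n)) +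
        (\<Sum>j. v j * qbinomial (x\<^sup>2) (n + n) (j + 1 + n))"
      unfolding triple_prod_finite[OF x w] u_def v_def by (simp only:)
  qed
  moreover have "(\<lambda>n. (\<Sum>j. u j * qbinomial (x\<^sup>2) (n + n) (j + 0 + n)) +
      (\<Sum>j. v j * qbinomial (x\<^sup>2) (n + n) (j + 1 + n))) \<longlonglongrightarrow>
      suminf u / qpoch_inf (x\<^sup>2) + suminf v / qpoch_inf (x\<^sup>2)"
    using summable_theta_series_terms[OF x(1) w] unfolding u_def v_def
    by (intro tendsto_add tendsto_suminf_qbinomial_central x2)
  ultimately show ?thesis
    unfolding theta_series_def u_def[symmetric] v_def[symmetric] by (simp add: add_divide_distrib)
qed

section \<open>Eta products of theta constants\<close>

lemma theta_char_zero_eq_theta_series: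
  assumes "Im \<tau> > 0"
  shows "theta_char z \<tau> 0 = theta_series (ep \<tau> (1/2)) (ep z 1)"
proof -
  have "theta_char_term z \<tau> 0 (int j) = ep \<tau> (1/2) ^ (j * j) * ep z 1 ^ j" for j
  proof -
    have "ep \<tau> ((of_int (int j) + of_real 0)\<^sup>2 / 2) = ep \<tau> (of_nat (j * j) * (1/2))"
      by (rule ep_eqI) (simp add: power2_eq_square)
    moreover have "ep z (of_int (int j) + of_real 0) = ep z (of_nat j * 1)" by simp
    ultimately show ?thesis unfolding theta_char_term_def ep_of_nat_mult by (simp only:)
  qed
  moreover have "theta_char_term z \<tau> 0 (- int (Suc j)) = ep \<tau> (1/2) ^ (Suc j * Suc j) / ep z 1 ^ Suc j" for j
  proof -
    have "ep \<tau> ((of_int (- int (Suc j)) + of_real 0)\<^sup>2 / 2) = ep \<tau> (of_nat (Suc j * Suc j) * (1/2))"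
      by (rule ep_eqI) (simp add: power2_eq_square algebra_simps)
    moreover have "ep z (of_int (- int (Suc j)) + of_real 0) = inverse (ep z (of_nat (Suc j) * 1))"
      unfolding ep_minus[symmetric] by (rule ep_eqI) simp
    ultimately show ?thesis
      unfolding theta_char_term_def ep_of_nat_mult by (simp only: divide_inverse)
  qed
  ultimately show ?thesis
    unfolding theta_char_def theta_series_def infsum_int_split[OF summable_on_theta_char_term[OF assms]]
    by simp
qed

lemma theta_char_half_eq_theta_series:
  assumes "Im \<tau> > 0"
  shows "theta_char 0 \<tau> (1/2) = ep \<tau> (1/8) * theta_series (ep \<tau> (1/2)) (ep \<tau> (1/2))"
proof -
  have pos: "theta_char_term 0 \<tau> (1/2) (int j) = ep \<tau> (1/8) * (ep \<tau> (1/2) ^ (j * j) * ep \<tau> (1/2) ^ j)" for j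
  proof -
    have "((of_int (int j) + of_real (1/2))\<^sup>2 / 2 :: complex) = 1/8 + (of_nat (j * j) * (1/2) + of_nat j * (1/2))"
      by (simp add: power2_eq_square field_simps)
    then show ?thesis unfolding theta_char_term_def
      by (simp only: ep_add[symmetric] ep_of_nat_mult ep_0_left mult_1_right)
  qed
  have neg: "theta_char_term 0 \<tau> (1/2) (- int (Suc j)) =
      ep \<tau> (1/8) * (ep \<tau> (1/2) ^ (Suc j * Suc j) / ep \<tau> (1/2) ^ Suc j)" for j
  proof -
    have "((of_int (- int (Suc j)) + of_real (1/2))\<^sup>2 / 2 :: complex) =
        1/8 + (of_nat (Suc j * Suc j) * (1/2) + - (of_nat (Suc j) * (1/2)))"
      by (simp add: power2_eq_square field_simps)
    then show ?thesis unfolding theta_char_term_def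
      by (simp only: ep_add[symmetric] ep_minus ep_of_nat_mult ep_0_left mult_1_right divide_inverse)
  qed
  have "norm (ep \<tau> (1/2)) < 1" using assms by (simp add: norm_ep)
  note summable = summable_theta_series_terms[OF this ep_nonzero[of \<tau> "1/2"], THEN summable_norm_cancel]
  show ?thesis
    unfolding theta_char_def theta_series_def infsum_int_split[OF summable_on_theta_char_term[OF assms]]
      pos neg suminf_mult[OF summable(1)] suminf_mult[OF summable(2)] distrib_left ..
qed

definition odd_qpoch :: "complex \<Rightarrow> nat \<Rightarrow> complex" where
  "odd_qpoch q n = (\<Prod>m<n. 1 - q ^ (2 * m + 1))"

definition neg_qpoch :: "complex \<Rightarrow> nat \<Rightarrow> complex" where
  "neg_qpoch q n = (\<Prod>m<n. 1 + q ^ Suc m)"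

lemma qpoch_double: "qpoch q (n + n) = qpoch (q\<^sup>2) n * odd_qpoch q n"
proof (induction n)
  case (Suc n)
  have "(q\<^sup>2) ^ Suc n = q ^ (2 * n + 2)"
    by (simp only: power_mult[symmetric]) (simp add: algebra_simps)
  then have "qpoch q (Suc n + Suc n) = qpoch q (n + n) * (1 - q ^ (2 * n + 1)) * (1 - (q\<^sup>2) ^ Suc n)"
    by (simp add: qpoch_Suc mult_2)
  then show ?case unfolding Suc qpoch_Suc odd_qpoch_def prod.lessThan_Suc by (simp only: mult_ac)
qed (simp add: odd_qpoch_def)

lemma qpoch_square: "qpoch (q\<^sup>2) n = neg_qpoch q n * qpoch q n"
proof (induction n)
  case (Suc n)
  have "1 - (q\<^sup>2) ^ Suc n = (1 + q ^ Suc n) * (1 - q ^ Suc n)"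
    by (simp add: power_mult[symmetric] algebra_simps power2_eq_square power_add[symmetric] mult_2)
  then show ?case unfolding qpoch_Suc Suc neg_qpoch_def by (simp add: mult_ac)
qed (simp add: neg_qpoch_def)

lemma triple_prod_minus_one: "triple_prod q (-1) n = odd_qpoch q n ^ 2"
  unfolding triple_prod_def odd_qpoch_def by (simp add: power2_eq_square prod.distrib[symmetric])

lemma triple_prod_one_mult_minus_one: "triple_prod x 1 n * triple_prod x (-1) n = odd_qpoch (x\<^sup>2) n ^ 2"
proof -
  have "(x\<^sup>2) ^ (2 * m + 1) = x ^ (2 * m + 1) * x ^ (2 * m + 1)" for m
    by (simp add: power_mult[symmetric] power_add[symmetric] mult_2 mult_ac)
  then have "(1 + x ^ (2 * m + 1)) * (1 + x ^ (2 * m + 1)) * ((1 - x ^ (2 * m + 1)) * (1 - x ^ (2 * m + 1))) =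
      (1 - (x\<^sup>2) ^ (2 * m + 1)) * (1 - (x\<^sup>2) ^ (2 * m + 1))" for m
    by (simp add: algebra_simps)
  then show ?thesis
    unfolding triple_prod_def odd_qpoch_def power2_eq_square[of "prod _ _"] prod.distrib[symmetric]
    by simp
qed

lemma triple_prod_self:
  assumes "x \<noteq> 0"
  shows "triple_prod x x n * (1 + (x\<^sup>2) ^ n) = 2 * neg_qpoch (x\<^sup>2) n ^ 2"
proof (induction n)
  case 0
  then show ?case by (simp add: triple_prod_def neg_qpoch_def)
next
  case (Suc n)
  have "1 + x ^ (2 * n + 1) * x = 1 + (x\<^sup>2) ^ Suc n"
    by (simp add: power_mult[symmetric] power_add[symmetric] mult_2 power_Suc2[symmetric])
  moreover have "1 + x ^ (2 * n + 1) / x = 1 + (x\<^sup>2) ^ n"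
    using assms by (simp add: power_mult[symmetric])
  ultimately have "triple_prod x x (Suc n) * (1 + (x\<^sup>2) ^ Suc n) =
      (triple_prod x x n * (1 + (x\<^sup>2) ^ n)) * (1 + (x\<^sup>2) ^ Suc n) ^ 2"
    unfolding triple_prod_def prod.lessThan_Suc by (simp add: power2_eq_square mult_ac)
  also have "\<dots> = 2 * neg_qpoch (x\<^sup>2) (Suc n) ^ 2"
    unfolding Suc neg_qpoch_def by (simp add: power2_eq_square mult_ac)
  finally show ?case .
qed

lemma theta_series_eq_limit:
  assumes "norm x < 1" "x \<noteq> 0" "w \<noteq> 0" "triple_prod x w \<longlonglongrightarrow> L"
  shows "theta_series x w = qpoch_inf (x\<^sup>2) * L"
proof -
  have "qpoch_inf (x\<^sup>2) \<noteq> 0"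
    using assms(1) by (intro qpoch_inf_nonzero) (simp add: norm_power power_less_one_iff)
  moreover have "theta_series x w / qpoch_inf (x\<^sup>2) = L"
    using triple_prod_tendsto[OF assms(1-3)] assms(4) LIMSEQ_unique by blast
  ultimately show ?thesis by (simp add: field_simps)
qed

lemma qpoch_double_tendsto: "norm q < 1 \<Longrightarrow> (\<lambda>n. qpoch q (n + n)) \<longlonglongrightarrow> qpoch_inf q"
  by (rule qpoch_tendsto_compose) (auto intro: filterlim_subseq simp: strict_mono_def)

lemma theta4_null_double:
  assumes "Im \<tau> > 0"
  shows "theta4 0 (2 * \<tau>) = qpoch_inf (ep \<tau> 1) ^ 2 / qpoch_inf (ep \<tau> 1 ^ 2)"
proof -
  define q where "q = ep \<tau> 1"
  have q: "norm q < 1" and q2: "norm (q\<^sup>2) < 1" and "q \<noteq> 0"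
    using assms by (simp_all add: q_def norm_ep norm_power power_less_one_iff)
  have "ep (2 * \<tau>) (1/2) = q" unfolding q_def by (rule ep_eqI) simp
  moreover have "ep (1/2) 1 = -1" using ep_of_real[of "1/2" 1] by (simp add: complex_eq_iff)
  moreover have "Im (2 * \<tau>) > 0" using assms by simp
  ultimately have "theta4 0 (2 * \<tau>) = theta_series q (-1)"
    unfolding theta4_eq_theta_char by (simp add: theta_char_zero_eq_theta_series)
  also have "\<dots> = qpoch_inf (q\<^sup>2) * (qpoch_inf q / qpoch_inf (q\<^sup>2)) ^ 2"
  proof (rule theta_series_eq_limit[OF q \<open>q \<noteq> 0\<close>])
    have "(\<lambda>n. (qpoch q (n + n) / qpoch (q\<^sup>2) n) ^ 2) \<longlonglongrightarrow> (qpoch_inf q / qpoch_inf (q\<^sup>2)) ^ 2"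
      by (intro tendsto_intros qpoch_double_tendsto q qpoch_tendsto q2 qpoch_inf_nonzero)
    moreover have "odd_qpoch q n = qpoch q (n + n) / qpoch (q\<^sup>2) n" for n
      using qpoch_double[of q n] qpoch_nonzero[OF q2, of n] by (simp add: field_simps)
    ultimately show "triple_prod q (-1) \<longlonglongrightarrow> (qpoch_inf q / qpoch_inf (q\<^sup>2)) ^ 2"
      unfolding triple_prod_minus_one by simp
  qed simp
  also have "\<dots> = qpoch_inf q ^ 2 / qpoch_inf (q\<^sup>2)"
    using qpoch_inf_nonzero[OF q2] by (simp add: power2_eq_square)
  finally show ?thesis unfolding q_def .
qed

lemma theta_series_product:
  assumes "Im \<tau> > 0"
  defines "x \<equiv> ep \<tau> (1/2)"
  shows "theta_series x x * theta_series x 1 * theta_series x (-1) = 2 * qpoch_inf (ep \<tau> 1) ^ 3"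
proof -
  define q where "q = ep \<tau> 1"
  have q: "norm q < 1" and x: "norm x < 1" "x \<noteq> 0" and x2: "x\<^sup>2 = q"
    using assms(1) by (simp_all add: q_def x_def norm_ep ep_add power2_eq_square)
  have nz: "qpoch_inf q \<noteq> 0" "1 + q ^ n \<noteq> 0" for n
    using qpoch_inf_nonzero[OF q] norm_power_less_1[OF q, of n]
    by (cases n; force simp: add_eq_0_iff)+
  have lim: "triple_prod x w \<longlonglongrightarrow> theta_series x w / qpoch_inf q" if "w \<noteq> 0" for w
    using triple_prod_tendsto[OF x that] unfolding x2 .
  have "triple_prod x x n * triple_prod x 1 n * triple_prod x (-1) n =
      2 * (qpoch q (n + n) / qpoch q n) ^ 2 / (1 + q ^ n)" for n
  proof -
    have "triple_prod x x n = 2 * neg_qpoch q n ^ 2 / (1 + q ^ n)"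
      using triple_prod_self[OF x(2), of n] nz(2)[of n] unfolding x2 by (simp add: field_simps)
    then have "triple_prod x x n * (triple_prod x 1 n * triple_prod x (-1) n) =
        2 * (neg_qpoch q n * odd_qpoch q n) ^ 2 / (1 + q ^ n)"
      unfolding triple_prod_one_mult_minus_one x2 by (simp add: power_mult_distrib)
    moreover have "neg_qpoch q n * odd_qpoch q n = qpoch q (n + n) / qpoch q n"
      using qpoch_double[of q n] qpoch_square[of q n] qpoch_nonzero[OF q, of n] by (simp add: field_simps)
    ultimately show ?thesis by (simp add: mult.assoc)
  qed
  moreover have "(\<lambda>n. 2 * (qpoch q (n + n) / qpoch q n) ^ 2 / (1 + q ^ n)) \<longlonglongrightarrow>
      2 * (qpoch_inf q / qpoch_inf q) ^ 2 / (1 + 0)"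
    using nz by (intro tendsto_intros qpoch_double_tendsto q qpoch_tendsto LIMSEQ_power_zero) simp_all
  moreover have "(\<lambda>n. triple_prod x x n * triple_prod x 1 n * triple_prod x (-1) n) \<longlonglongrightarrow>
      theta_series x x / qpoch_inf q * (theta_series x 1 / qpoch_inf q) * (theta_series x (-1) / qpoch_inf q)"
    using x(2) by (intro tendsto_mult lim) simp_all
  ultimately have "theta_series x x / qpoch_inf q * (theta_series x 1 / qpoch_inf q) *
      (theta_series x (-1) / qpoch_inf q) = 2"
    using LIMSEQ_unique nz(1) by fastforce
  then show ?thesis using nz(1) unfolding q_def by (simp add: field_simps power3_eq_cube)
qed

lemma eta_eq_qpoch_inf: "eta \<tau> = ep \<tau> (1/24) * qpoch_inf (ep \<tau> 1)"
proof -
  have "ep \<tau> (of_nat (Suc n)) = ep \<tau> 1 ^ Suc n" for n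
    using ep_of_nat_mult[of \<tau> "Suc n" 1] by simp
  then show ?thesis unfolding eta_def qpoch_inf_def by simp
qed

lemma eta_nonzero: "Im \<tau> > 0 \<Longrightarrow> eta \<tau> \<noteq> 0"
  unfolding eta_eq_qpoch_inf by (simp add: qpoch_inf_nonzero norm_ep)

lemma eta_double_mult_theta4_null:
  assumes "Im \<tau> > 0"
  shows "eta (2 * \<tau>) * theta4 0 (2 * \<tau>) = eta \<tau> ^ 2"
proof -
  have "ep (2 * \<tau>) s = ep \<tau> s ^ 2" for s
    using ep_eqI[of s "2 * \<tau>" "of_nat 2 * s" \<tau>] ep_of_nat_mult[of \<tau> 2 s] by simp
  then have "eta (2 * \<tau>) = ep \<tau> (1/24) ^ 2 * qpoch_inf (ep \<tau> 1 ^ 2)"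
    unfolding eta_eq_qpoch_inf by simp
  moreover have "norm (ep \<tau> 1 ^ 2) < 1" using assms by (simp add: norm_ep norm_power power_less_one_iff)
  ultimately show ?thesis
    using qpoch_inf_nonzero unfolding theta4_null_double[OF assms] eta_eq_qpoch_inf
    by (simp add: field_simps power2_eq_square)
qed

lemma theta_nulls_eq_eta_cube:
  assumes "Im \<tau> > 0"
  shows "theta2 0 \<tau> * theta3 0 \<tau> * theta4 0 \<tau> = 2 * eta \<tau> ^ 3"
proof -
  have "ep \<tau> (1/24) ^ 3 = ep \<tau> (1/8)"
    using ep_eqI[of "1/8" \<tau> "of_nat 3 * (1/24)" \<tau>] ep_of_nat_mult[of \<tau> 3 "1/24"] by simp
  moreover have "ep (1/2) 1 = -1" using ep_of_real[of "1/2" 1] by (simp add: complex_eq_iff)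
  ultimately show ?thesis
    unfolding theta2_eq_theta_char theta3_eq_theta_char theta4_eq_theta_char eta_eq_qpoch_inf
      theta_char_half_eq_theta_series[OF assms] theta_char_zero_eq_theta_series[OF assms]
    using theta_series_product[OF assms] by (simp add: power_mult_distrib mult_ac)
qed

section \<open>The quartic combination\<close>

lemma quartic_forms_polarized:
  fixes P Q R S E F j :: complex
  assumes j: "j * j = -1"
  defines "A \<equiv> (P + Q) / 2" and "C \<equiv> (P - Q) / 2" and "B \<equiv> (R + j * S) / 2" and "D \<equiv> (R - j * S) / 2"
  shows "-2 * (A^4 + B^4 + C^4 + D^4) + 6 * (A^2*B^2 + B^2*C^2 + C^2*D^2 + D^2*A^2) =
      3/2 * (P^2 + Q^2) * (R^2 - S^2) - ((P^2 + Q^2)^2 + (R^2 - S^2)^2) / 4 - P^2 * Q^2 + R^2 * S^2"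
    and "A*B*F^2 + B*C*E^2 + C*D*F^2 + A*D*E^2 = ((F^2 + E^2) * P * R + j * (F^2 - E^2) * Q * S) / 2"
  unfolding A_def B_def C_def D_def using j by (simp_all add: field_simps; algebra)+

lemma NS_ABCD_part:
  fixes \<eta> S3 S4 t3 t4 T3 T4 a1 a2 a3 a4 :: complex
  assumes \<eta>: "\<eta> \<noteq> 0" and S3: "S3^2 * \<eta> = t3" and S4: "S4^2 * \<eta> = t4"
    and a3: "a3^2 + a2^2 = T3 * t3" and a2: "a3^2 - a2^2 = T4 * t4"
    and a4: "a4^2 + a1^2 = T4 * t3" and a1: "a4^2 - a1^2 = T3 * t4"
  defines "A \<equiv> (S3 * a3 + S4 * a4) / (2 * \<eta>)" and "C \<equiv> (S3 * a3 - S4 * a4) / (2 * \<eta>)"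
    and "B \<equiv> (S3 * a2 + \<i> * S4 * a1) / (2 * \<eta>)" and "D \<equiv> (S3 * a2 - \<i> * S4 * a1) / (2 * \<eta>)"
  shows "-2 * (A^4 + B^4 + C^4 + D^4) + 6 * (A^2*B^2 + B^2*C^2 + C^2*D^2 + D^2*A^2) =
      (T3^2 * (t3^4 + t4^4) - 10 * T4^2 * t3^2 * t4^2) / (4 * \<eta>^6)"
proof -
  define P Q R S where "P = S3 * a3 / \<eta>" and "Q = S4 * a4 / \<eta>" and "R = S3 * a2 / \<eta>" and "S = S4 * a1 / \<eta>"
  have ABCD: "A = (P + Q) / 2" "C = (P - Q) / 2" "B = (R + \<i> * S) / 2" "D = (R - \<i> * S) / 2"
    unfolding A_def B_def C_def D_def P_def Q_def R_def S_def using \<eta> by (simp_all add: field_simps)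
  have "-2 * (A^4 + B^4 + C^4 + D^4) + 6 * (A^2*B^2 + B^2*C^2 + C^2*D^2 + D^2*A^2) =
      3/2 * (P^2 + Q^2) * (R^2 - S^2) - ((P^2 + Q^2)^2 + (R^2 - S^2)^2) / 4 - P^2 * Q^2 + R^2 * S^2"
    unfolding ABCD by (rule quartic_forms_polarized(1)[OF i_squared])
  also have "\<dots> = (3/2 * (t3 * a3^2 + t4 * a4^2) * (t3 * a2^2 - t4 * a1^2)
      - ((t3 * a3^2 + t4 * a4^2)^2 + (t3 * a2^2 - t4 * a1^2)^2) / 4
      - t3 * t4 * (a3^2 * a4^2 - a2^2 * a1^2)) / \<eta>^6"
    unfolding P_def Q_def R_def S_def S3[symmetric] S4[symmetric] using \<eta>
    by (simp add: field_simps; algebra)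
  also have "\<dots> = (T3^2 * (t3^4 + t4^4) - 10 * T4^2 * t3^2 * t4^2) / (4 * \<eta>^6)"
  proof -
    have "a3^2 = (T3 * t3 + T4 * t4) / 2" using a3 a2 by (simp add: field_simps; algebra)
    moreover have "a2^2 = (T3 * t3 - T4 * t4) / 2" using a3 a2 by (simp add: field_simps; algebra)
    moreover have "a4^2 = (T4 * t3 + T3 * t4) / 2" using a4 a1 by (simp add: field_simps; algebra)
    moreover have "a1^2 = (T4 * t3 - T3 * t4) / 2" using a4 a1 by (simp add: field_simps; algebra)
    ultimately show ?thesis using \<eta> by (simp add: field_simps; algebra)
  qed
  finally show ?thesis .
qed

lemma NS_EF_part:
  fixes \<eta> \<kappa> S3 S4 t2 t3 t4 T1 T2 a1 a2 a3 a4 e f :: complex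
  assumes \<eta>: "\<eta> \<noteq> 0" and S3: "S3^2 * \<eta> = t3" and S4: "S4^2 * \<eta> = t4"
    and a32: "2 * a3 * a2 = T2 * t2" and a41: "2 * a4 * a1 = T1 * t2"
    and fe_plus: "f^2 + e^2 = T2 * t3" and fe_minus: "f^2 - e^2 = \<i> * T1 * t4"
  defines "A \<equiv> (S3 * a3 + S4 * a4) / (2 * \<eta>)" and "C \<equiv> (S3 * a3 - S4 * a4) / (2 * \<eta>)"
    and "B \<equiv> (S3 * a2 + \<i> * S4 * a1) / (2 * \<eta>)" and "D \<equiv> (S3 * a2 - \<i> * S4 * a1) / (2 * \<eta>)"
    and "E \<equiv> \<kappa> * e" and "F \<equiv> \<kappa> * f"
  shows "2 * (E^4 + F^4) + 12 * (A*B*F^2 + B*C*E^2 + C*D*F^2 + A*D*E^2) =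
      (\<kappa>^4 + 3 * \<kappa>^2 * t2 / \<eta>^3) * (T2^2 * t3^2 - T1^2 * t4^2)"
proof -
  define P Q R S where "P = S3 * a3 / \<eta>" and "Q = S4 * a4 / \<eta>" and "R = S3 * a2 / \<eta>" and "S = S4 * a1 / \<eta>"
  have ABCD: "A = (P + Q) / 2" "C = (P - Q) / 2" "B = (R + \<i> * S) / 2" "D = (R - \<i> * S) / 2"
    unfolding A_def B_def C_def D_def P_def Q_def R_def S_def using \<eta> by (simp_all add: field_simps)
  have "A*B*F^2 + B*C*E^2 + C*D*F^2 + A*D*E^2 = ((F^2 + E^2) * P * R + \<i> * (F^2 - E^2) * Q * S) / 2"
    unfolding ABCD by (rule quartic_forms_polarized(2)[OF i_squared])
  also have "\<dots> = \<kappa>^2 * ((f^2 + e^2) * t3 * (a3 * a2) + \<i> * (f^2 - e^2) * t4 * (a4 * a1)) / (2 * \<eta>^3)"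
    unfolding E_def F_def P_def Q_def R_def S_def S3[symmetric] S4[symmetric] using \<eta>
    by (simp add: field_simps; algebra)
  also have "\<dots> = \<kappa>^2 * t2 * (T2^2 * t3^2 - T1^2 * t4^2) / (4 * \<eta>^3)"
    using a32 a41 unfolding fe_plus fe_minus using \<eta> by (simp add: field_simps; algebra)
  finally have "A*B*F^2 + B*C*E^2 + C*D*F^2 + A*D*E^2 = \<kappa>^2 * t2 * (T2^2 * t3^2 - T1^2 * t4^2) / (4 * \<eta>^3)" .
  moreover have "E^4 + F^4 = \<kappa>^4 * ((f^2 + e^2)^2 + (f^2 - e^2)^2) / 2"
    unfolding E_def F_def by (simp add: field_simps; algebra)
  ultimately show ?thesis unfolding fe_plus fe_minus using \<eta> by (simp add: field_simps; algebra)
qed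

lemma NS_combination_identity:
  fixes \<eta> \<kappa> S3 S4 t2 t3 t4 T1 T2 T3 T4 a1 a2 a3 a4 e f :: complex
  assumes \<eta>: "\<eta> \<noteq> 0" and S3: "S3^2 * \<eta> = t3" and S4: "S4^2 * \<eta> = t4"
    and dup: "a3^2 + a2^2 = T3 * t3" "a3^2 - a2^2 = T4 * t4" "a4^2 + a1^2 = T4 * t3"
      "a4^2 - a1^2 = T3 * t4" "2 * a3 * a2 = T2 * t2" "2 * a4 * a1 = T1 * t2"
    and fe: "f^2 + e^2 = T2 * t3" "f^2 - e^2 = \<i> * T1 * t4"
    and \<kappa>: "\<kappa>^2 * (t3 * t4) = 1" and eta_cube: "2 * \<eta>^3 = t2 * t3 * t4"
    and jacobi: "t3^4 = t2^4 + t4^4"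
  shows "let
      A = (S3 * a3 + S4 * a4) / (2 * \<eta>);
      C = (S3 * a3 - S4 * a4) / (2 * \<eta>);
      B = (S3 * a2 + \<i> * S4 * a1) / (2 * \<eta>);
      D = (S3 * a2 - \<i> * S4 * a1) / (2 * \<eta>);
      E = \<kappa> * e;
      F = \<kappa> * f;
      NS1 = A^4 + B^4 + C^4 + D^4;
      NS2 = E^4 + F^4;
      NS3 = A^2*B^2 + B^2*C^2 + C^2*D^2 + D^2*A^2;
      NS4 = A*B*F^2 + B*C*E^2 + C*D*F^2 + A*D*E^2
    in -2*NS1 + 2*NS2 + 6*NS3 + 12*NS4 = -24 * T1^2 / t3^2 + 2 * (t2^4 - t4^4) * T3^2 / \<eta>^6"
proof -
  have nz: "t2 \<noteq> 0" "t3 \<noteq> 0" "t4 \<noteq> 0" using \<kappa> eta_cube \<eta> by auto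
  define A C B D where "A = (S3 * a3 + S4 * a4) / (2 * \<eta>)" and "C = (S3 * a3 - S4 * a4) / (2 * \<eta>)"
    and "B = (S3 * a2 + \<i> * S4 * a1) / (2 * \<eta>)" and "D = (S3 * a2 - \<i> * S4 * a1) / (2 * \<eta>)"
  have "-2 * (A^4 + B^4 + C^4 + D^4) + 2 * ((\<kappa> * e)^4 + (\<kappa> * f)^4) +
      6 * (A^2*B^2 + B^2*C^2 + C^2*D^2 + D^2*A^2) +
      12 * (A*B*(\<kappa> * f)^2 + B*C*(\<kappa> * e)^2 + C*D*(\<kappa> * f)^2 + A*D*(\<kappa> * e)^2) =
      (T3^2 * (t3^4 + t4^4) - 10 * T4^2 * t3^2 * t4^2) / (4 * \<eta>^6) +
      (\<kappa>^4 + 3 * \<kappa>^2 * t2 / \<eta>^3) * (T2^2 * t3^2 - T1^2 * t4^2)"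
    using NS_ABCD_part[OF \<eta> S3 S4 dup(1-4)] NS_EF_part[OF \<eta> S3 S4 dup(5,6) fe, of \<kappa>]
    unfolding A_def B_def C_def D_def by (simp add: algebra_simps)
  also have "\<dots> = -24 * T1^2 / t3^2 + 2 * (t2^4 - t4^4) * T3^2 / \<eta>^6"
  proof -
    have "t2^2 * T2^2 = t3^2 * T3^2 - t4^2 * T4^2" using dup(1,2,5) by algebra
    moreover have T1: "t2^2 * T1^2 = t3^2 * T4^2 - t4^2 * T3^2" using dup(3,4,6) by algebra
    ultimately have "t2^2 * (T2^2 * t3^2 - T1^2 * t4^2) = T3^2 * (t3^4 + t4^4) - 2 * T4^2 * t3^2 * t4^2"
      by algebra
    moreover have "\<kappa>^4 + 3 * \<kappa>^2 * t2 / \<eta>^3 = 7 / (t3^2 * t4^2)"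
    proof -
      have k4: "\<kappa>^4 = (\<kappa>^2)^2" by (simp flip: power_mult)
      have k2: "\<kappa>^2 = 1 / (t3 * t4)" using \<kappa> nz by (simp add: field_simps)
      have e3: "\<eta>^3 = t2 * t3 * t4 / 2" using eta_cube by (simp add: field_simps mult.commute)
      show ?thesis unfolding k4 k2 e3 using nz by (simp add: field_simps power2_eq_square)
    qed
    moreover have "4 * \<eta>^6 = t2^2 * t3^2 * t4^2" using eta_cube by algebra
    ultimately show ?thesis using T1 jacobi nz \<eta> by (simp add: field_simps; algebra)
  qed
  finally show ?thesis unfolding Let_def A_def[symmetric] B_def[symmetric] C_def[symmetric] D_def[symmetric] .
qed

theorem proposition96:
  fixes S3 S4 :: "complex \<Rightarrow> complex" and \<tau> z :: complex
  assumes "normalized_sqrt (\<lambda>t. theta3 0 t / eta t) S3"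
    and "normalized_sqrt (\<lambda>t. theta4 0 t / eta t) S4"
    and "Im \<tau> > 0"
  shows "let
      A = (S3 \<tau> * theta3 z (2*\<tau>) + S4 \<tau> * theta4 z (2*\<tau>)) / (2 * eta \<tau>);
      C = (S3 \<tau> * theta3 z (2*\<tau>) - S4 \<tau> * theta4 z (2*\<tau>)) / (2 * eta \<tau>);
      B = (S3 \<tau> * theta2 z (2*\<tau>) + \<i> * S4 \<tau> * theta1 z (2*\<tau>)) / (2 * eta \<tau>);
      D = (S3 \<tau> * theta2 z (2*\<tau>) - \<i> * S4 \<tau> * theta1 z (2*\<tau>)) / (2 * eta \<tau>);
      E = eta (2*\<tau>) / eta \<tau> ^ 2 * ep \<tau> (1/16) * ep z (-1/4) * theta3 (z - \<tau>/2) (2*\<tau>);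
      F = eta (2*\<tau>) / eta \<tau> ^ 2 * ep \<tau> (1/16) * ep z (1/4) * theta3 (z + \<tau>/2) (2*\<tau>);
      NS1 = A^4 + B^4 + C^4 + D^4;
      NS2 = E^4 + F^4;
      NS3 = A^2*B^2 + B^2*C^2 + C^2*D^2 + D^2*A^2;
      NS4 = A*B*F^2 + B*C*E^2 + C*D*F^2 + A*D*E^2
    in -2*NS1 + 2*NS2 + 6*NS3 + 12*NS4
       = -24 * theta1 z \<tau> ^ 2 / theta3 0 \<tau> ^ 2
         + 2 * (theta2 0 \<tau> ^ 4 - theta4 0 \<tau> ^ 4) * theta3 z \<tau> ^ 2 / eta \<tau> ^ 6"
proof -
  note \<tau> = \<open>Im \<tau> > 0\<close>
  have \<eta>: "eta \<tau> \<noteq> 0" using eta_nonzero[OF \<tau>] .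
  have S3: "S3 \<tau> ^ 2 * eta \<tau> = theta3 0 \<tau>" and S4: "S4 \<tau> ^ 2 * eta \<tau> = theta4 0 \<tau>"
    using assms \<eta> unfolding normalized_sqrt_def by simp_all
  define \<kappa> where "\<kappa> = eta (2 * \<tau>) / eta \<tau> ^ 2"
  have "theta4 0 (2 * \<tau>) ^ 2 = theta3 0 \<tau> * theta4 0 \<tau>"
    using theta_duplication(4)[OF \<tau>, of 0] by simp
  moreover have "\<kappa> * theta4 0 (2 * \<tau>) = 1"
    using eta_double_mult_theta4_null[OF \<tau>] \<eta> unfolding \<kappa>_def by (simp add: field_simps)
  ultimately have \<kappa>: "\<kappa> ^ 2 * (theta3 0 \<tau> * theta4 0 \<tau>) = 1"
    by (metis power_mult_distrib power_one)
  have "eta (2 * \<tau>) / eta \<tau> ^ 2 * ep \<tau> (1/16) * ep z c * theta3 w (2 * \<tau>) =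
      \<kappa> * (ep \<tau> (1/16) * ep z c * theta3 w (2 * \<tau>))" for c w
    unfolding \<kappa>_def by (simp only: mult.assoc)
  then show ?thesis
    using NS_combination_identity[OF \<eta> S3 S4 theta_duplication[OF \<tau>]
        theta3_half_shift_duplication[OF \<tau>] \<kappa> theta_nulls_eq_eta_cube[OF \<tau>, symmetric]
        jacobi_quartic_identity[OF \<tau>]]
    by (simp only:)
qed

end
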